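(* The Dd-MDP corresponding to any online job scheduling (OJS) instance admits a deterministic chasing oracle whose chasing regret is at most $2\cdot CW$ (for any target pricing policy, any initial round and any initial bandwidth vector).
   Context: OJS problem: there are $N$ slots; slot $i\in[N]$ has bandwidth $c(i)$. $T$ jobs arrive in order $t=1,\dots,T$; job $t$ has arrival slot $a_t$, departure slot $d_t\ge a_t$, length $1\le l_t\le d_t-a_t+1$ and value $v_t\in[0,1)$, chosen by an adversary; jobs are reported at the beginning of their arrival slot in the order of their indices (so $a_1\le a_2\le\cdots\le a_T$). $C\ge\max_ic(i)$ and $W\ge\max_t(d_t-a_t+1)$. Let $A_t=[a_t,a_t+W-1]$ and $\mathcal I_t=\{[i,i+l_t-1]:a_t\le i\le d_t-l_t+1\}$. For job $t$ the mechanism posts $\bm p\in(0,1]^{A_t}$ (before seeing $d_t,l_t,v_t$); the job receives one bandwidth unit of each slot in $\hat A^{\bm p}_t=\emptyset$ if $v_t<\min_{I\in\mathcal I_t}\sum_{i\in I}\bm p(i)$, and otherwise $\hat A^{\bm p}_t=\arg\min_{I\in\mathcal I_t}\sum_{i\in I}\bm p(i)$ (lexicographic ties), paying $\hat q^{\bm p}_t=\sum_{i\in\hat A^{\bm p}_t}\bm p(i)$. The bandwidth vector $\bm\lambda_t\in\{0,\dots,C\}^{A_t}$ records remaining bandwidth: $\bm\lambda_t(i)=c(i)$ if slot $i$ was not allocated to jobs $1,\dots,t-1$, and $\bm\lambda_{t+1}(i)=\bm\lambda_t(i)-1$ if slot $i$ is allocated to job $t$ and $i\in A_{t+1}$. $\bm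 p$ is feasible for $\bm\lambda$ if $\bm p(i)=1$ whenever $\bm\lambda(i)=0$. A pricing policy maps bandwidth vectors to feasible price vectors. Corresponding Dd-MDP: states are bandwidth vectors; actions at a state are feasible price vectors; reward $f_t(s,x)=\hat q^x_t$; transition $g_t(s,x)=s'$ where $s'(i)=s(i)-\mathbb{1}[i\in\hat A^x_t]$ for $i\in A_t\cap A_{t+1}$ and $s'(i)=c(i)$ for $i\in A_{t+1}\setminus A_t$. A policy $\gamma$ is simulated from the true start: $s^\gamma_1=s_1$, $x^\gamma_t=\gamma(s^\gamma_t)$, $s^\gamma_{t+1}=g_t(s^\gamma_t,x^\gamma_t)$. Chasing oracle: given target policy $\gamma$, invoked at round $t_{\mathrm{init}}$ with an arbitrary initial state $s_{\mathrm{init}}$, it outputs in each round $t\ge t_{\mathrm{init}}$ an action $\hat x(t)$ feasible for $\hat s(t)$, where $\hat s(t_{\mathrm{init}})=s_{\mathrm{init}}$, $\hat s(t)=g_{t-1}(\hat s(t-1),\hat x(t-1))$, observing $g_t,f_t$ after each round; its chasing regret up to any halting round $t_{\mathrm{final}}\ge t_{\mathrm{init}}$ is $\sum_{t=t_{\mathrm{init}}}^{t_{\mathrm{final}}}f_t(s^\gamma_t,x^\gamma_t)-\sum_{t=t_{\mathrm{init}}}^{t_{\mathrm{final}}}\mathbb{E}[f_t(\hat s(t),\hat x(t))]$. *)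

theory Defs
  imports Main "HOL.Real"
begin

text \<open>Slots are natural numbers; a job is a tuple (a, d, l, v) = (arrival slot,
  departure slot, length, value).  Rounds (jobs) are indexed 1..T.
  A bandwidth vector on the window A = {a..<a+W} is represented by a function
  nat => nat of which only the values on the window matter; a price vector
  likewise by a function nat => real.\<close>

type_synonym job = "nat \<times> nat \<times> nat \<times> real"

definition window :: "nat \<Rightarrow> nat \<Rightarrow> nat set" where
  "window W a = {a..<a+W}"

definition job_of :: "(nat \<Rightarrow> nat) \<Rightarrow> (nat \<Rightarrow> nat) \<Rightarrow> (nat \<Rightarrow> nat) \<Rightarrow> (nat \<Rightarrow> real) \<Rightarrow> nat \<Rightarrow> job" where
  "job_of a d l v t = (a t, d t, l t, v t)"

definition OJS_instance :: "nat \<Rightarrow> nat \<Rightarrow> nat \<Rightarrow> (nat \<Rightarrow> nat) \<Rightarrow> (nat \<Rightarrow> nat) \<Rightarrow> (nat \<Rightarrow> nat) \<Rightarrow> (nat \<Rightarrow> real) \<Rightarrow> bool" where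
  "OJS_instance N W T a d l v \<longleftrightarrow>
     (\<forall>t\<in>{1..T}. 1 \<le> a t \<and> a t \<le> d t \<and> d t \<le> N \<and>
                 1 \<le> l t \<and> l t \<le> d t - a t + 1 \<and>
                 0 \<le> v t \<and> v t < 1 \<and> d t - a t + 1 \<le> W) \<and>
     (\<forall>t\<in>{1..<T}. a t \<le> a (Suc t))"

definition bw_vec :: "nat \<Rightarrow> nat \<Rightarrow> nat \<Rightarrow> (nat \<Rightarrow> nat) \<Rightarrow> bool" where
  "bw_vec W C a bw \<longleftrightarrow> (\<forall>i\<in>window W a. bw i \<le> C)"

definition feasible_price :: "nat \<Rightarrow> nat \<Rightarrow> (nat \<Rightarrow> nat) \<Rightarrow> (nat \<Rightarrow> real) \<Rightarrow> bool" where
  "feasible_price W a bw p \<longleftrightarrow>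
     (\<forall>i\<in>window W a. 0 < p i \<and> p i \<le> 1 \<and> (bw i = 0 \<longrightarrow> p i = 1))"

text \<open>A pricing policy: given the window start (i.e. the index set A_t of the
  bandwidth vector) and the bandwidth vector, returns a feasible price vector.\<close>
definition pricing_policy :: "nat \<Rightarrow> nat \<Rightarrow> (nat \<Rightarrow> (nat \<Rightarrow> nat) \<Rightarrow> (nat \<Rightarrow> real)) \<Rightarrow> bool" where
  "pricing_policy W C \<gamma> \<longleftrightarrow>
     (\<forall>a bw. bw_vec W C a bw \<longrightarrow> feasible_price W a bw (\<gamma> a bw))"

definition interval_cost :: "(nat \<Rightarrow> real) \<Rightarrow> nat \<Rightarrow> nat \<Rightarrow> real" where
  "interval_cost p i l = (\<Sum>j\<in>{i..<i+l}. p j)"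

definition starts :: "job \<Rightarrow> nat set" where
  "starts j = (case j of (a, d, l, v) \<Rightarrow> {a..d+1-l})"

definition min_cost :: "(nat \<Rightarrow> real) \<Rightarrow> job \<Rightarrow> real" where
  "min_cost p j = (case j of (a, d, l, v) \<Rightarrow> Min ((\<lambda>i. interval_cost p i l) ` starts j))"

text \<open>Lexicographically smallest minimising interval = smallest minimising start.\<close>
definition alloc_start :: "(nat \<Rightarrow> real) \<Rightarrow> job \<Rightarrow> nat" where
  "alloc_start p j = (case j of (a, d, l, v) \<Rightarrow>
      (LEAST i. i \<in> starts j \<and> interval_cost p i l = min_cost p j))"

definition allocated :: "(nat \<Rightarrow> real) \<Rightarrow> job \<Rightarrow> bool" where
  "allocated p j = (case j of (a, d, l, v) \<Rightarrow> \<not> (v < min_cost p j))"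

definition alloc_set :: "(nat \<Rightarrow> real) \<Rightarrow> job \<Rightarrow> nat set" where
  "alloc_set p j = (case j of (a, d, l, v) \<Rightarrow>
      (if allocated p j then {alloc_start p j ..< alloc_start p j + l} else {}))"

definition payment :: "(nat \<Rightarrow> real) \<Rightarrow> job \<Rightarrow> real" where
  "payment p j = (if allocated p j then min_cost p j else 0)"

text \<open>Transition g_t(s, x), where j is job t and j' is job t+1.\<close>
definition trans :: "nat \<Rightarrow> (nat \<Rightarrow> nat) \<Rightarrow> job \<Rightarrow> job \<Rightarrow> (nat \<Rightarrow> nat) \<Rightarrow> (nat \<Rightarrow> real) \<Rightarrow> (nat \<Rightarrow> nat)" where
  "trans W c j j' s x = (\<lambda>i.
      if i \<in> window W (fst j) \<inter> window W (fst j') then s i - (if i \<in> alloc_set x j then 1 else 0)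
      else if i \<in> window W (fst j') then c i else 0)"

text \<open>Trajectory of policy \<gamma> from the true start s_1 (all bandwidth free):
  policy_state ... n is the state s^gamma_(n+1).\<close>
primrec policy_state :: "nat \<Rightarrow> (nat \<Rightarrow> nat) \<Rightarrow> (nat \<Rightarrow> (nat \<Rightarrow> nat) \<Rightarrow> (nat \<Rightarrow> real)) \<Rightarrow> (nat \<Rightarrow> job) \<Rightarrow> nat \<Rightarrow> (nat \<Rightarrow> nat)" where
  "policy_state W c \<gamma> job 0 = (\<lambda>i. if i \<in> window W (fst (job 1)) then c i else 0)"
| "policy_state W c \<gamma> job (Suc n) =
     trans W c (job (Suc n)) (job (Suc (Suc n))) (policy_state W c \<gamma> job n)
       (\<gamma> (fst (job (Suc n))) (policy_state W c \<gamma> job n))"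

text \<open>A deterministic chasing chaser: given target policy, initial round, initial
  state, the history of jobs 1..t-1 and the arrival slot a_t of the current round
  (which determines the index set A_t of the current state), it outputs a price
  vector for round t.\<close>
type_synonym chaser =
  "(nat \<Rightarrow> (nat \<Rightarrow> nat) \<Rightarrow> (nat \<Rightarrow> real)) \<Rightarrow> nat \<Rightarrow> (nat \<Rightarrow> nat) \<Rightarrow> job list \<Rightarrow> nat \<Rightarrow> (nat \<Rightarrow> real)"

definition chaser_action :: "chaser \<Rightarrow> (nat \<Rightarrow> (nat \<Rightarrow> nat) \<Rightarrow> (nat \<Rightarrow> real)) \<Rightarrow> nat \<Rightarrow> (nat \<Rightarrow> nat) \<Rightarrow> (nat \<Rightarrow> job) \<Rightarrow> nat \<Rightarrow> (nat \<Rightarrow> real)" where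
  "chaser_action Orc \<gamma> t0 s0 job t = Orc \<gamma> t0 s0 (map job [1..<t]) (fst (job t))"

text \<open>chaser_state ... k is the chaser's state hat-s(t0 + k).\<close>
primrec chaser_state :: "nat \<Rightarrow> (nat \<Rightarrow> nat) \<Rightarrow> chaser \<Rightarrow> (nat \<Rightarrow> (nat \<Rightarrow> nat) \<Rightarrow> (nat \<Rightarrow> real)) \<Rightarrow> nat \<Rightarrow> (nat \<Rightarrow> nat) \<Rightarrow> (nat \<Rightarrow> job) \<Rightarrow> nat \<Rightarrow> (nat \<Rightarrow> nat)" where
  "chaser_state W c Orc \<gamma> t0 s0 job 0 = s0"
| "chaser_state W c Orc \<gamma> t0 s0 job (Suc k) =
     trans W c (job (t0 + k)) (job (Suc (t0 + k))) (chaser_state W c Orc \<gamma> t0 s0 job k)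
       (chaser_action Orc \<gamma> t0 s0 job (t0 + k))"

end

theory Submission
  imports Defs
begin

text \<open>The chaser copies the target policy's prices as long as its own remaining bandwidth
  dominates the target's on the current window, and otherwise posts price 1 on every slot, which
  no job (value below 1, length at least 1) can afford. Either way its prices are feasible and it
  sells a subset of what the target sells. Slots entering the window after the initial round
  \<open>t0\<close> start at full capacity in both runs, so dominance can only fail on slots below
  \<open>a t0 + W\<close>; a blocking round therefore has its window inside \<open>[a t0, a t0 + 2W)\<close>.
  Such a round loses less than 1, and only if the target sells a slot of this range. Each slot
  \<open>i\<close> is sold by the target at most \<open>c i \<le> C\<close> times, since every sale uses up one unit of its
  bandwidth, so at most \<open>2 W C\<close> rounds lose anything.\<close>

section \<open>Single rounds\<close>

definition valid_job :: "nat \<Rightarrow> job \<Rightarrow> bool" where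
  "valid_job W j \<longleftrightarrow> (case j of (a, d, l, v) \<Rightarrow>
     a \<le> d \<and> 1 \<le> l \<and> l \<le> d - a + 1 \<and> d - a + 1 \<le> W \<and> v < 1)"

lemma OJS_instance_valid_job:
  "OJS_instance N W T a d l v \<Longrightarrow> t \<in> {1..T} \<Longrightarrow> valid_job W (job_of a d l v t)"
  by (auto simp: OJS_instance_def valid_job_def job_of_def)

lemma OJS_instance_arrival_mono:
  "OJS_instance N W T a d l v \<Longrightarrow> t \<in> {1..<T} \<Longrightarrow> fst (job_of a d l v t) \<le> fst (job_of a d l v (Suc t))"
  by (auto simp: OJS_instance_def job_of_def)

lemma alloc_start_minimal:
  assumes "valid_job W (a, d, l, v)"
  shows "alloc_start p (a, d, l, v) \<in> {a..d + 1 - l}"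
    and "interval_cost p (alloc_start p (a, d, l, v)) l = min_cost p (a, d, l, v)"
proof -
  let ?cost = "\<lambda>i. interval_cost p i l"
  have "{a..d + 1 - l} \<noteq> {}"
    using assms by (auto simp: valid_job_def)
  then have "Min (?cost ` {a..d + 1 - l}) \<in> ?cost ` {a..d + 1 - l}"
    by (intro Min_in) auto
  then obtain i where "i \<in> {a..d + 1 - l}" "?cost i = min_cost p (a, d, l, v)"
    by (auto simp: min_cost_def starts_def)
  then have "alloc_start p (a, d, l, v) \<in> {a..d + 1 - l} \<and>
      ?cost (alloc_start p (a, d, l, v)) = min_cost p (a, d, l, v)"
    unfolding alloc_start_def starts_def by (auto intro: LeastI2_wellorder)
  then show "alloc_start p (a, d, l, v) \<in> {a..d + 1 - l}"
    and "?cost (alloc_start p (a, d, l, v)) = min_cost p (a, d, l, v)" by auto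
qed

lemma alloc_set_subset_window:
  assumes "valid_job W j"
  shows "alloc_set p j \<subseteq> window W (fst j)"
proof -
  obtain a d l v where j: "j = (a, d, l, v)" by (cases j)
  show ?thesis
    using alloc_start_minimal(1)[of W a d l v p] assms
    by (auto simp: j alloc_set_def window_def valid_job_def)
qed

lemma alloc_set_nonempty:
  assumes "valid_job W j" "allocated p j"
  shows "alloc_set p j \<noteq> {}"
  using assms by (cases j) (auto simp: alloc_set_def valid_job_def)

lemma price_lt_1_if_allocated:
  assumes "valid_job W j" and nonneg: "\<forall>i\<in>window W (fst j). 0 \<le> p i"
    and "i \<in> alloc_set p j"
  shows "p i < 1"
proof -
  obtain a d l v where j: "j = (a, d, l, v)" by (cases j)
  let ?I = "{alloc_start p j..<alloc_start p j + l}"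
  have alloc: "allocated p j" and i: "i \<in> ?I"
    using assms(3) by (auto simp: j alloc_set_def split: if_splits)
  have "?I \<subseteq> window W (fst j)"
    using alloc_set_subset_window[OF assms(1), of p] alloc by (simp add: j alloc_set_def)
  then have "p i \<le> (\<Sum>k\<in>?I. p k)"
    using i nonneg by (intro member_le_sum) auto
  also have "\<dots> = min_cost p j"
    using alloc_start_minimal(2)[of W a d l v p] assms(1) by (simp add: j interval_cost_def)
  also have "\<dots> \<le> v"
    using alloc by (simp add: j allocated_def)
  also have "v < 1"
    using assms(1) by (simp add: j valid_job_def)
  finally show ?thesis .
qed

lemma payment_le_allocated:
  "valid_job W j \<Longrightarrow> payment p j \<le> of_bool (allocated p j)"
  by (cases j) (auto simp: payment_def allocated_def valid_job_def)

lemma unit_prices_not_allocated: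
  assumes "valid_job W j"
  shows "\<not> allocated (\<lambda>_. 1) j"
proof -
  obtain a d l v where j: "j = (a, d, l, v)" by (cases j)
  have "{a..d + 1 - l} \<noteq> {}"
    using assms by (auto simp: j valid_job_def)
  then have "min_cost (\<lambda>_. 1) j = l"
    by (simp add: j min_cost_def starts_def interval_cost_def)
  then show ?thesis
    using assms by (auto simp: j allocated_def valid_job_def)
qed

lemma allocated_slot_has_bandwidth:
  assumes "valid_job W j" "feasible_price W (fst j) s x" "i \<in> alloc_set x j"
  shows "1 \<le> s i"
proof -
  have "i \<in> window W (fst j)"
    using alloc_set_subset_window[OF assms(1)] assms(3) by blast
  moreover have "x i < 1"
    using price_lt_1_if_allocated[OF assms(1) _ assms(3)] assms(2)
    by (simp add: feasible_price_def less_imp_le)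
  ultimately show ?thesis
    using assms(2) by (fastforce simp: feasible_price_def)
qed

section \<open>Transitions and the slot potential\<close>

lemma policy_state_le_capacity: "policy_state W c \<gamma> J n i \<le> c i"
proof (induction n arbitrary: i)
  case (Suc n)
  show ?case
    using Suc.IH[of i] by (auto simp: trans_def)
qed simp

lemma policy_state_outside_window:
  "i \<notin> window W (fst (J (Suc n))) \<Longrightarrow> policy_state W c \<gamma> J n i = 0"
  by (cases n) (auto simp: trans_def)

lemma trans_mono:
  assumes "i \<in> window W (fst j) \<Longrightarrow> s i \<le> h i" and "alloc_set y j \<subseteq> alloc_set x j"
  shows "trans W c j j' s x i \<le> trans W c j j' h y i"
  using assms by (auto simp: trans_def)

definition slot_potential :: "nat \<Rightarrow> (nat \<Rightarrow> nat) \<Rightarrow> nat \<Rightarrow> (nat \<Rightarrow> nat) \<Rightarrow> nat \<Rightarrow> nat" where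
  "slot_potential W c a s i = (if i < a + W then s i else c i)"

lemma slot_potential_trans:
  assumes "valid_job W j" "fst j \<le> fst j'" "feasible_price W (fst j) s x"
  shows "slot_potential W c (fst j') (trans W c j j' s x) i + of_bool (i \<in> alloc_set x j)
    \<le> slot_potential W c (fst j) s i"
proof -
  have "i \<in> alloc_set x j \<Longrightarrow> i \<in> window W (fst j) \<and> 1 \<le> s i"
    using alloc_set_subset_window[OF assms(1)] allocated_slot_has_bandwidth[OF assms(1,3)] by blast
  then show ?thesis
    using assms(2) by (auto simp: slot_potential_def trans_def window_def)
qed

lemma allocations_le_slot_potential:
  assumes "t0 \<le> t1"
    and valid: "\<And>t. t \<in> {t0..t1} \<Longrightarrow> valid_job W (J t)"
    and mono: "\<And>t. t \<in> {t0..<t1} \<Longrightarrow> fst (J t) \<le> fst (J (Suc t))"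
    and feasible: "\<And>t. t \<in> {t0..t1} \<Longrightarrow> feasible_price W (fst (J t)) (s t) (x t)"
    and step: "\<And>t. t \<in> {t0..<t1} \<Longrightarrow> s (Suc t) = trans W c (J t) (J (Suc t)) (s t) (x t)"
  shows "(\<Sum>t = t0..t1. of_bool (i \<in> alloc_set (x t) (J t))) \<le> slot_potential W c (fst (J t0)) (s t0) i"
  using assms(1)
proof (induction t0 rule: inc_induct)
  case base
  show ?case
    using slot_potential_trans[of W "J t1" "J t1" "s t1" "x t1" c i] valid[of t1] feasible[of t1] assms(1)
    by (simp del: sum_of_bool_eq)
next
  case (step t)
  then have "(\<Sum>u = t..t1. of_bool (i \<in> alloc_set (x u) (J u)))
      = of_bool (i \<in> alloc_set (x t) (J t)) + (\<Sum>u = Suc t..t1. of_bool (i \<in> alloc_set (x u) (J u)))"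
    by (simp add: sum.atLeast_Suc_atMost)
  also have "\<dots> \<le> of_bool (i \<in> alloc_set (x t) (J t)) + slot_potential W c (fst (J (Suc t))) (s (Suc t)) i"
    using step.IH by simp
  also have "\<dots> \<le> slot_potential W c (fst (J t)) (s t) i"
    using slot_potential_trans[of W "J t" "J (Suc t)" "s t" "x t" c i] valid mono feasible step.hyps
    by (simp add: assms(5) add.commute)
  finally show ?case .
qed

section \<open>The follow-or-block chaser\<close>

definition follow_or_block ::
    "nat \<Rightarrow> (nat \<Rightarrow> nat) \<Rightarrow> (nat \<Rightarrow> (nat \<Rightarrow> nat) \<Rightarrow> nat \<Rightarrow> real) \<Rightarrow> (nat \<Rightarrow> job) \<Rightarrow> nat
      \<Rightarrow> (nat \<Rightarrow> nat) \<Rightarrow> nat \<Rightarrow> real" where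
  "follow_or_block W c \<gamma> J t h =
     (if \<forall>i\<in>window W (fst (J t)). policy_state W c \<gamma> J (t - 1) i \<le> h i
      then \<gamma> (fst (J t)) (policy_state W c \<gamma> J (t - 1)) else (\<lambda>_. 1))"

primrec chase_state ::
    "nat \<Rightarrow> (nat \<Rightarrow> nat) \<Rightarrow> (nat \<Rightarrow> (nat \<Rightarrow> nat) \<Rightarrow> nat \<Rightarrow> real) \<Rightarrow> nat \<Rightarrow> (nat \<Rightarrow> nat)
      \<Rightarrow> (nat \<Rightarrow> job) \<Rightarrow> nat \<Rightarrow> nat \<Rightarrow> nat" where
  "chase_state W c \<gamma> t0 s0 J 0 = s0"
| "chase_state W c \<gamma> t0 s0 J (Suc k) =
     trans W c (J (t0 + k)) (J (Suc (t0 + k))) (chase_state W c \<gamma> t0 s0 J k)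
       (follow_or_block W c \<gamma> J (t0 + k) (chase_state W c \<gamma> t0 s0 J k))"

text \<open>The history of rounds \<open>1..<t\<close> together with the arrival slot of round \<open>t\<close>, read as a
  job sequence; all other job data is a dummy.\<close>

definition history_jobs :: "job list \<Rightarrow> nat \<Rightarrow> nat \<Rightarrow> job" where
  "history_jobs hs a0 k = (if 1 \<le> k \<and> k \<le> length hs then hs ! (k - 1) else (a0, 0, 0, 0))"

definition follow_chaser :: "nat \<Rightarrow> (nat \<Rightarrow> nat) \<Rightarrow> chaser" where
  "follow_chaser W c \<gamma> t0 s0 hs a0 =
     follow_or_block W c \<gamma> (history_jobs hs a0) (Suc (length hs))
       (chase_state W c \<gamma> t0 s0 (history_jobs hs a0) (Suc (length hs) - t0))"

definition same_history :: "(nat \<Rightarrow> job) \<Rightarrow> (nat \<Rightarrow> job) \<Rightarrow> nat \<Rightarrow> bool" where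
  "same_history J J' t \<longleftrightarrow> (\<forall>k\<in>{1..<t}. J k = J' k) \<and> fst (J t) = fst (J' t)"

lemma same_history_Suc: "same_history J J' (Suc t) \<Longrightarrow> 1 \<le> t \<Longrightarrow> same_history J J' t"
  by (auto simp: same_history_def)

lemma same_history_jobs: "1 \<le> t \<Longrightarrow> same_history (history_jobs (map J [1..<t]) (fst (J t))) J t"
  by (auto simp: same_history_def history_jobs_def)

lemma trans_cong_arrival: "fst j' = fst j'' \<Longrightarrow> trans W c j j' = trans W c j j''"
  unfolding trans_def by (intro ext) simp

lemma policy_state_same_history:
  "same_history J J' (Suc n) \<Longrightarrow> policy_state W c \<gamma> J n = policy_state W c \<gamma> J' n"
proof (induction n)
  case (Suc n)
  then have "policy_state W c \<gamma> J n = policy_state W c \<gamma> J' n" "J (Suc n) = J' (Suc n)"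
    "fst (J (Suc (Suc n))) = fst (J' (Suc (Suc n)))"
    by (auto simp: same_history_def dest: same_history_Suc)
  then show ?case
    using trans_cong_arrival[of "J' (Suc (Suc n))" "J (Suc (Suc n))" W c] by simp
qed (simp add: same_history_def)

lemma follow_or_block_same_history:
  "1 \<le> t \<Longrightarrow> same_history J J' t \<Longrightarrow> follow_or_block W c \<gamma> J t = follow_or_block W c \<gamma> J' t"
  using policy_state_same_history[of J J' "t - 1"]
  by (auto simp: follow_or_block_def same_history_def)

lemma chase_state_same_history:
  "1 \<le> t0 \<Longrightarrow> same_history J J' (t0 + k) \<Longrightarrow> chase_state W c \<gamma> t0 s0 J k = chase_state W c \<gamma> t0 s0 J' k"
proof (induction k)
  case (Suc k)
  then have "same_history J J' (t0 + k)" "J (t0 + k) = J' (t0 + k)"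
    "fst (J (Suc (t0 + k))) = fst (J' (Suc (t0 + k)))"
    by (auto simp: same_history_def dest: same_history_Suc)
  with Suc show ?case
    using follow_or_block_same_history[of "t0 + k" J J']
      trans_cong_arrival[of "J' (Suc (t0 + k))" "J (Suc (t0 + k))" W c] by simp
qed simp

lemma chaser_action_follow_chaser:
  assumes "1 \<le> t0" "t0 \<le> t"
  shows "chaser_action (follow_chaser W c) \<gamma> t0 s0 J t
    = follow_or_block W c \<gamma> J t (chase_state W c \<gamma> t0 s0 J (t - t0))"
proof -
  let ?J = "history_jobs (map J [1..<t]) (fst (J t))"
  have "same_history ?J J t"
    using same_history_jobs assms by simp
  moreover have "Suc (length (map J [1..<t])) = t"
    using assms by simp
  ultimately show ?thesis
    using follow_or_block_same_history[of t ?J J] chase_state_same_history[of t0 ?J J "t - t0"] assms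
    by (simp add: chaser_action_def follow_chaser_def)
qed

lemma chaser_state_follow_chaser:
  "1 \<le> t0 \<Longrightarrow> chaser_state W c (follow_chaser W c) \<gamma> t0 s0 J k = chase_state W c \<gamma> t0 s0 J k"
  by (induction k) (simp_all add: chaser_action_follow_chaser)

section \<open>Regret of the chaser\<close>

locale chasing_run =
  fixes W C T t0 t1 :: nat and c :: "nat \<Rightarrow> nat" and \<gamma> :: "nat \<Rightarrow> (nat \<Rightarrow> nat) \<Rightarrow> nat \<Rightarrow> real"
    and J :: "nat \<Rightarrow> job" and s0 :: "nat \<Rightarrow> nat"
  assumes capacity_le: "\<And>i. c i \<le> C"
    and valid: "\<And>t. t \<in> {1..T} \<Longrightarrow> valid_job W (J t)"
    and arrival_mono: "\<And>t. t \<in> {1..<T} \<Longrightarrow> fst (J t) \<le> fst (J (Suc t))"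
    and policy: "pricing_policy W C \<gamma>"
    and rounds: "1 \<le> t0" "t0 \<le> t1" "t1 \<le> T"
begin

definition target_state :: "nat \<Rightarrow> nat \<Rightarrow> nat" where
  "target_state t = policy_state W c \<gamma> J (t - 1)"

definition target_action :: "nat \<Rightarrow> nat \<Rightarrow> real" where
  "target_action t = \<gamma> (fst (J t)) (target_state t)"

definition oracle_state :: "nat \<Rightarrow> nat \<Rightarrow> nat" where
  "oracle_state t = chase_state W c \<gamma> t0 s0 J (t - t0)"

definition oracle_action :: "nat \<Rightarrow> nat \<Rightarrow> real" where
  "oracle_action t = follow_or_block W c \<gamma> J t (oracle_state t)"

definition follows :: "nat \<Rightarrow> bool" where
  "follows t \<longleftrightarrow> (\<forall>i\<in>window W (fst (J t)). target_state t i \<le> oracle_state t i)"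

definition contested_slots :: "nat set" where
  "contested_slots = {fst (J t0)..<fst (J t0) + 2 * W}"

lemma valid_round: "t \<in> {t0..t1} \<Longrightarrow> valid_job W (J t)"
  using valid rounds by simp

lemma arrival_mono_round: "t \<in> {t0..<t1} \<Longrightarrow> fst (J t) \<le> fst (J (Suc t))"
  using arrival_mono rounds by simp

lemma first_arrival_le:
  assumes "t \<in> {t0..t1}"
  shows "fst (J t0) \<le> fst (J t)"
proof -
  have "t0 \<le> t" "t \<le> t1"
    using assms by auto
  then show ?thesis
  proof (induction t rule: dec_induct)
    case (step t)
    then show ?case
      using arrival_mono_round[of t] by simp
  qed simp
qed

lemma target_state_Suc:
  "1 \<le> t \<Longrightarrow> target_state (Suc t) = trans W c (J t) (J (Suc t)) (target_state t) (target_action t)"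
  by (cases t) (simp_all add: target_state_def target_action_def)

lemma target_action_feasible: "feasible_price W (fst (J t)) (target_state t) (target_action t)"
proof -
  have "target_state t i \<le> C" for i
    using policy_state_le_capacity capacity_le le_trans unfolding target_state_def by metis
  then have "bw_vec W C (fst (J t)) (target_state t)"
    by (simp add: bw_vec_def)
  then show ?thesis
    using policy by (simp add: pricing_policy_def target_action_def)
qed

lemma oracle_state_Suc:
  "t0 \<le> t \<Longrightarrow> oracle_state (Suc t) = trans W c (J t) (J (Suc t)) (oracle_state t) (oracle_action t)"
  by (simp add: oracle_state_def oracle_action_def Suc_diff_le)

lemma oracle_action_eq: "oracle_action t = (if follows t then target_action t else (\<lambda>_. 1))"
  by (simp add: oracle_action_def follow_or_block_def follows_def target_action_def target_state_def)

lemma oracle_action_feasible: "feasible_price W (fst (J t)) (oracle_state t) (oracle_action t)"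
proof (cases "follows t")
  case True
  then have "oracle_state t i = 0 \<Longrightarrow> target_state t i = 0" if "i \<in> window W (fst (J t))" for i
    using that by (auto simp: follows_def)
  then show ?thesis
    using True target_action_feasible[of t] by (simp add: feasible_price_def oracle_action_eq)
qed (simp add: feasible_price_def oracle_action_eq)

lemma oracle_alloc_subset:
  "t \<in> {t0..t1} \<Longrightarrow> alloc_set (oracle_action t) (J t) \<subseteq> alloc_set (target_action t) (J t)"
  using unit_prices_not_allocated[OF valid_round, of t]
  by (cases "J t") (auto simp: oracle_action_eq alloc_set_def)

lemma fresh_slots_dominated:
  assumes "t \<in> {t0..t1}" "fst (J t0) + W \<le> i"
  shows "target_state t i \<le> oracle_state t i"
proof -
  have "t0 \<le> t" "t \<le> t1"
    using assms(1) by auto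
  then show ?thesis
  proof (induction t rule: dec_induct)
    case base
    have "i \<notin> window W (fst (J (Suc (t0 - 1))))"
      using assms(2) rounds(1) by (simp add: window_def)
    then show ?case
      using policy_state_outside_window by (simp add: target_state_def)
  next
    case (step t)
    then show ?case
      using trans_mono[OF _ oracle_alloc_subset] target_state_Suc[of t] oracle_state_Suc[of t] rounds(1)
      by simp
  qed
qed

lemma blocked_window_subset:
  assumes "t \<in> {t0..t1}" "\<not> follows t"
  shows "window W (fst (J t)) \<subseteq> contested_slots"
proof -
  obtain i where "i \<in> window W (fst (J t))" "\<not> target_state t i \<le> oracle_state t i"
    using assms(2) by (auto simp: follows_def)
  moreover have "i < fst (J t0) + W"
    using fresh_slots_dominated[OF assms(1)] calculation(2) not_le by blast
  ultimately have "fst (J t) < fst (J t0) + W"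
    by (simp add: window_def)
  then show ?thesis
    using first_arrival_le[OF assms(1)] by (auto simp: window_def contested_slots_def)
qed

lemma round_regret_le:
  assumes "t \<in> {t0..t1}"
  shows "payment (target_action t) (J t) - payment (oracle_action t) (J t)
    \<le> card (contested_slots \<inter> alloc_set (target_action t) (J t))"
proof (cases "follows t")
  case False
  have "payment (target_action t) (J t) \<le> of_bool (allocated (target_action t) (J t))"
    using payment_le_allocated[OF valid_round[OF assms]] .
  also have "\<dots> \<le> card (contested_slots \<inter> alloc_set (target_action t) (J t))"
  proof (cases "allocated (target_action t) (J t)")
    case True
    then have "contested_slots \<inter> alloc_set (target_action t) (J t) \<noteq> {}"
      using alloc_set_nonempty alloc_set_subset_window blocked_window_subset[OF assms False]
        valid_round[OF assms] by blast
    then show ?thesis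
      by (simp add: card_gt_0_iff contested_slots_def Suc_le_eq)
  qed simp
  finally show ?thesis
    using False unit_prices_not_allocated[OF valid_round[OF assms]]
    by (simp add: oracle_action_eq payment_def)
qed (simp add: oracle_action_eq)

lemma target_allocations_le:
  "(\<Sum>t = t0..t1. card (contested_slots \<inter> alloc_set (target_action t) (J t))) \<le> 2 * W * C"
proof -
  have card_eq: "card (contested_slots \<inter> A) = (\<Sum>i\<in>contested_slots. of_bool (i \<in> A))" for A
    by (simp add: contested_slots_def Int_def)
  have "(\<Sum>t = t0..t1. card (contested_slots \<inter> alloc_set (target_action t) (J t)))
      = (\<Sum>i\<in>contested_slots. \<Sum>t = t0..t1. of_bool (i \<in> alloc_set (target_action t) (J t)))"
    unfolding card_eq by (rule sum.swap)
  also have "\<dots> \<le> (\<Sum>i\<in>contested_slots. slot_potential W c (fst (J t0)) (target_state t0) i)"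
  proof (intro sum_mono)
    fix i
    show "(\<Sum>t = t0..t1. of_bool (i \<in> alloc_set (target_action t) (J t)))
        \<le> slot_potential W c (fst (J t0)) (target_state t0) i"
    proof (rule allocations_le_slot_potential[of t0 t1 W J target_state target_action c i])
      show "target_state (Suc t) = trans W c (J t) (J (Suc t)) (target_state t) (target_action t)"
        if "t \<in> {t0..<t1}" for t
        using that rounds(1) target_state_Suc[of t] by simp
    qed (use rounds valid_round arrival_mono_round target_action_feasible in auto)
  qed
  also have "\<dots> \<le> (\<Sum>i\<in>contested_slots. C)"
  proof (intro sum_mono)
    fix i
    show "slot_potential W c (fst (J t0)) (target_state t0) i \<le> C"
      using policy_state_le_capacity[of W c \<gamma> J "t0 - 1" i] capacity_le[of i]
      by (simp add: slot_potential_def target_state_def)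
  qed
  also have "\<dots> = 2 * W * C"
    by (simp add: contested_slots_def)
  finally show ?thesis .
qed

lemma regret_le:
  "(\<Sum>t = t0..t1. payment (target_action t) (J t)) - (\<Sum>t = t0..t1. payment (oracle_action t) (J t))
    \<le> 2 * real C * real W"
proof -
  have "(\<Sum>t = t0..t1. payment (target_action t) (J t)) - (\<Sum>t = t0..t1. payment (oracle_action t) (J t))
      \<le> (\<Sum>t = t0..t1. real (card (contested_slots \<inter> alloc_set (target_action t) (J t))))"
    unfolding sum_subtractf[symmetric] by (intro sum_mono round_regret_le)
  also have "\<dots> \<le> real (2 * W * C)"
    unfolding of_nat_sum[symmetric] of_nat_le_iff by (rule target_allocations_le)
  finally show ?thesis
    by (simp add: mult_ac)
qed

end

theorem lemma1:
  fixes N C W :: nat and c :: "nat \<Rightarrow> nat"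
  assumes "\<forall>i. c i \<le> C"
  shows "\<exists>Orc :: chaser.
    \<forall>T a d l v \<gamma> t0 s0 t1.
      OJS_instance N W T a d l v \<and> pricing_policy W C \<gamma> \<and>
      1 \<le> t0 \<and> t0 \<le> t1 \<and> t1 \<le> T \<and> bw_vec W C (a t0) s0 \<longrightarrow>
      (\<forall>t\<in>{t0..t1}.
         feasible_price W (a t) (chaser_state W c Orc \<gamma> t0 s0 (job_of a d l v) (t - t0))
           (chaser_action Orc \<gamma> t0 s0 (job_of a d l v) t)) \<and>
      (\<Sum>t\<in>{t0..t1}. payment (\<gamma> (a t) (policy_state W c \<gamma> (job_of a d l v) (t - 1))) (job_of a d l v t))
      - (\<Sum>t\<in>{t0..t1}. payment (chaser_action Orc \<gamma> t0 s0 (job_of a d l v) t) (job_of a d l v t))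
      \<le> 2 * real C * real W"
  apply (intro exI[of _ "follow_chaser W c"] allI impI, elim conjE)
  subgoal premises prems for T a d l v \<gamma> t0 s0 t1
  proof -
    interpret run: chasing_run W C T t0 t1 c \<gamma> "job_of a d l v" s0
      using assms prems OJS_instance_valid_job OJS_instance_arrival_mono by unfold_locales auto
    have arrival: "fst (job_of a d l v t) = a t" for t
      by (simp add: job_of_def)
    have "chaser_state W c (follow_chaser W c) \<gamma> t0 s0 (job_of a d l v) (t - t0) = run.oracle_state t" for t
      using prems by (simp add: chaser_state_follow_chaser run.oracle_state_def)
    moreover have "chaser_action (follow_chaser W c) \<gamma> t0 s0 (job_of a d l v) t = run.oracle_action t"
      if "t \<in> {t0..t1}" for t
      using prems that by (simp add: chaser_action_follow_chaser run.oracle_action_def run.oracle_state_def)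
    moreover have "\<gamma> (a t) (policy_state W c \<gamma> (job_of a d l v) (t - 1)) = run.target_action t" for t
      by (simp add: run.target_action_def run.target_state_def arrival)
    ultimately show ?thesis
      using run.oracle_action_feasible run.regret_le by (simp add: arrival)
  qed
  done

end
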